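(* Let $1\le p<\infty$. There exist sequences $a,b$ and a weight sequence $w$ as described in the context such that $B_w$ is a bounded operator on $\ell^p_{a,b}(\Omega_{r,R})$ which is not similar to any bilateral weighted backward shift $e_n\mapsto \alpha_ne_{n-1}$ (with bounded weights $(\alpha_n)$) on $\ell^p(\mathbb{Z})$.
   Context: For complex sequences $a=(a_n)_{n\in\mathbb{Z}}$ with $a_n\ne0$ and $b=(b_n)_{n\in\mathbb{Z}}$ satisfying $\sup_{n\le -1}\left|\frac{a_{n+1}\cdots a_0}{b_n\cdots b_{-1}}\right|=\infty$ (automatically regarded as satisfied when $b_n=0$ for all $n\le-1$), put $f_n(z)=(a_n+b_nz)z^n$; let $r=\limsup_{n\to+\infty}(|a_{-n}|+|b_{-n}|)^{1/n}$, $1/R=\limsup_{n\to+\infty}(|a_n|+|b_n|)^{1/n}$ (finite), with $r<R$, and $\Omega_{r,R}=\{r<|z|<R\}$. $\ell^p_{a,b}(\Omega_{r,R})$ is the Banach space of analytic functions on $\Omega_{r,R}$ of the form $f=\sum_{n}\lambda_nf_n$ with $(\lambda_n)\in\ell^p(\mathbb{Z})$, normed by $\|f\|=(\sum|\lambda_n|^p)^{1/p}$. For a complex sequence $w$, $B_w(\sum_n\widehat f(n)z^n)=\sum_nw_n\widehat f(n)z^{n-1}$ on Laurent expansions. $\{e_n\}$ is the standard basis of $\ell^p(\mathbb{Z})$. *)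

theory Defs
  imports "HOL-Complex_Analysis.Complex_Analysis"
begin

definition fblock :: "(int \<Rightarrow> complex) \<Rightarrow> (int \<Rightarrow> complex) \<Rightarrow> int \<Rightarrow> complex \<Rightarrow> complex" where
  "fblock a b n z = (a n + b n * z) * z powi n"

definition rad_in :: "(int \<Rightarrow> complex) \<Rightarrow> (int \<Rightarrow> complex) \<Rightarrow> ereal" where
  "rad_in a b = limsup (\<lambda>n::nat. ereal (root n (cmod (a (- int n)) + cmod (b (- int n)))))"

definition inv_rad_out :: "(int \<Rightarrow> complex) \<Rightarrow> (int \<Rightarrow> complex) \<Rightarrow> ereal" where
  "inv_rad_out a b = limsup (\<lambda>n::nat. ereal (root n (cmod (a (int n)) + cmod (b (int n)))))"

definition rad_out :: "(int \<Rightarrow> complex) \<Rightarrow> (int \<Rightarrow> complex) \<Rightarrow> ereal" where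
  "rad_out a b = inverse (inv_rad_out a b)"

text \<open>Standing assumptions on the pair of sequences (a,b).  The supremum condition is read as:
  either b_n = 0 for all n \<le> -1, or all these b_n are nonzero and the quotients are unbounded.\<close>
definition admissible :: "(int \<Rightarrow> complex) \<Rightarrow> (int \<Rightarrow> complex) \<Rightarrow> bool" where
  "admissible a b \<longleftrightarrow>
     (\<forall>n. a n \<noteq> 0) \<and>
     ((\<forall>n\<le>-1. b n = 0) \<or>
      ((\<forall>n\<le>-1. b n \<noteq> 0) \<and>
       \<not> bdd_above {cmod ((\<Prod>k\<in>{n+1..0}. a k) / (\<Prod>k\<in>{n..-1}. b k)) | n. n \<le> -1})) \<and>
     inv_rad_out a b < \<infinity> \<and>
     rad_in a b < rad_out a b"

definition annulus :: "ereal \<Rightarrow> ereal \<Rightarrow> complex set" where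
  "annulus r R = {z. r < ereal (cmod z) \<and> ereal (cmod z) < R}"

definition Omega :: "(int \<Rightarrow> complex) \<Rightarrow> (int \<Rightarrow> complex) \<Rightarrow> complex set" where
  "Omega a b = annulus (rad_in a b) (rad_out a b)"

definition lp :: "real \<Rightarrow> (int \<Rightarrow> complex) set" where
  "lp p = {x. (\<lambda>n. cmod (x n) powr p) summable_on UNIV}"

definition lpnorm :: "real \<Rightarrow> (int \<Rightarrow> complex) \<Rightarrow> real" where
  "lpnorm p x = (\<Sum>\<^sub>\<infinity>n. cmod (x n) powr p) powr (1 / p)"

text \<open>Functions on \<Omega> are represented as functions on \<complex> vanishing outside \<Omega>.
  The coefficient sequence l represents f if f = \<Sum> l_n f_n on \<Omega>.\<close>
definition represents :: "real \<Rightarrow> (int \<Rightarrow> complex) \<Rightarrow> (int \<Rightarrow> complex) \<Rightarrow> (int \<Rightarrow> complex) \<Rightarrow> (complex \<Rightarrow> complex) \<Rightarrow> bool" where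
  "represents p a b l f \<longleftrightarrow> l \<in> lp p \<and>
     (\<forall>z\<in>Omega a b. (\<lambda>n. l n * fblock a b n z) summable_on UNIV) \<and>
     (\<forall>z. f z = (if z \<in> Omega a b then (\<Sum>\<^sub>\<infinity>n. l n * fblock a b n z) else 0))"

definition lpab :: "real \<Rightarrow> (int \<Rightarrow> complex) \<Rightarrow> (int \<Rightarrow> complex) \<Rightarrow> (complex \<Rightarrow> complex) set" where
  "lpab p a b = {f. \<exists>l. represents p a b l f}"

definition lpab_norm :: "real \<Rightarrow> (int \<Rightarrow> complex) \<Rightarrow> (int \<Rightarrow> complex) \<Rightarrow> (complex \<Rightarrow> complex) \<Rightarrow> real" where
  "lpab_norm p a b f = Inf {lpnorm p l | l. represents p a b l f}"

definition laurent_coeff :: "(int \<Rightarrow> complex) \<Rightarrow> (int \<Rightarrow> complex) \<Rightarrow> (complex \<Rightarrow> complex) \<Rightarrow> int \<Rightarrow> complex" where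
  "laurent_coeff a b f n =
     (let \<rho> = (SOME \<rho>::real. 0 < \<rho> \<and> rad_in a b < ereal \<rho> \<and> ereal \<rho> < rad_out a b)
      in contour_integral (circlepath 0 \<rho>) (\<lambda>z. f z / z powi (n + 1)) / (2 * complex_of_real pi * \<i>))"

definition Bw :: "(int \<Rightarrow> complex) \<Rightarrow> (int \<Rightarrow> complex) \<Rightarrow> (int \<Rightarrow> complex) \<Rightarrow> (complex \<Rightarrow> complex) \<Rightarrow> (complex \<Rightarrow> complex)" where
  "Bw a b w f = (\<lambda>z. if z \<in> Omega a b
       then (\<Sum>\<^sub>\<infinity>n. w n * laurent_coeff a b f n * z powi (n - 1)) else 0)"

definition Bw_bounded :: "real \<Rightarrow> (int \<Rightarrow> complex) \<Rightarrow> (int \<Rightarrow> complex) \<Rightarrow> (int \<Rightarrow> complex) \<Rightarrow> bool" where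
  "Bw_bounded p a b w \<longleftrightarrow>
     (\<forall>f\<in>lpab p a b.
        (\<forall>z\<in>Omega a b. (\<lambda>n. w n * laurent_coeff a b f n * z powi (n - 1)) summable_on UNIV) \<and>
        Bw a b w f \<in> lpab p a b) \<and>
     (\<exists>C. \<forall>f\<in>lpab p a b. lpab_norm p a b (Bw a b w f) \<le> C * lpab_norm p a b f)"

text \<open>Bilateral weighted backward shift e_n \<mapsto> \<alpha>_n e_{n-1} on \<ell>^p(\<int>).\<close>
definition wshift :: "(int \<Rightarrow> complex) \<Rightarrow> (int \<Rightarrow> complex) \<Rightarrow> (int \<Rightarrow> complex)" where
  "wshift \<alpha> x = (\<lambda>m. \<alpha> (m + 1) * x (m + 1))"

definition Bw_similar_to_shift :: "real \<Rightarrow> (int \<Rightarrow> complex) \<Rightarrow> (int \<Rightarrow> complex) \<Rightarrow> (int \<Rightarrow> complex) \<Rightarrow> bool" where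
  "Bw_similar_to_shift p a b w \<longleftrightarrow>
     (\<exists>\<alpha> J. bounded (range \<alpha>) \<and>
        bij_betw J (lpab p a b) (lp p) \<and>
        (\<forall>f\<in>lpab p a b. \<forall>g\<in>lpab p a b. J (\<lambda>z. f z + g z) = (\<lambda>n. J f n + J g n)) \<and>
        (\<forall>c. \<forall>f\<in>lpab p a b. J (\<lambda>z. c * f z) = (\<lambda>n. c * J f n)) \<and>
        (\<exists>c C. 0 < c \<and> 0 < C \<and>
           (\<forall>f\<in>lpab p a b. c * lpab_norm p a b f \<le> lpnorm p (J f) \<and>
                              lpnorm p (J f) \<le> C * lpab_norm p a b f)) \<and>
        (\<forall>f\<in>lpab p a b. J (Bw a b w f) = wshift \<alpha> (J f)))"

end

theory Submission
  imports Defs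
begin

(*
  Take a_n = 2^n and b_n = 0 for n < 0, a_n = 1 and b_n = P(n) / P(n+1) for n >= 0, where
  P(n) = (n+1)^(1+1/p), and w_n = P(n) / P(n-1) for n > 0, w_n = 0 otherwise; then Omega is the
  annulus 1/2 < |z| < 1. Comparing Laurent coefficients, B_w sends sum l_n f_n to sum (T l)_n f_n,
  where (T l)_m = (P(m+1) l_(m+1) + (-1)^m l_0) / P(m) for m >= 0 and (T l)_m = 0 for m < 0;
  T is bounded on l^p because P(m+1) <= 4 P(m) and P^(-p) is summable.
  T fixes the sequence equal to 1/P(m) at even m >= 0, so 1 is an eigenvalue of B_w. But T l = -l
  forces |l_m|^p = |l_0|^p / (m+1), so -1 is not. For a weighted backward shift, a fixed vector
  x yields the eigenvector ((-1)^m x_m) for -1, and a similarity transports eigenvectors.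
*)

section \<open>Sums over the integers\<close>

lemma int_UNIV_eq_nonneg_Un_neg: "(UNIV::int set) = range int \<union> range (\<lambda>n::nat. - int n - 1)"
proof -
  have "x \<in> range int \<union> range (\<lambda>n::nat. - int n - 1)" for x :: int
  proof (cases "x \<ge> 0")
    case True
    then show ?thesis by (metis UnI1 nonneg_int_cases rangeI)
  next
    case False
    then have "x = - int (nat (- x - 1)) - 1" by simp
    then show ?thesis by (metis UnI2 rangeI)
  qed
  then show ?thesis by auto
qed

lemma nonneg_summable_on_int:
  fixes M :: "int \<Rightarrow> real"
  assumes "\<And>n. M n \<ge> 0" "summable (\<lambda>n. M (int n))" "summable (\<lambda>n. M (- int n - 1))"
  shows "M summable_on UNIV"
proof -
  have "M summable_on range int"
    using assms by (subst summable_on_reindex) (auto simp: summable_on_UNIV_nonneg_real_iff o_def)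
  moreover have "M summable_on range (\<lambda>n::nat. - int n - 1)"
    using assms by (subst summable_on_reindex) (auto simp: inj_on_def summable_on_UNIV_nonneg_real_iff o_def)
  ultimately show ?thesis
    using summable_on_union int_UNIV_eq_nonneg_Un_neg by metis
qed

lemma geometric_summable_on_int:
  fixes \<theta> :: real
  assumes "0 \<le> \<theta>" "\<theta> < 1"
  shows "(\<lambda>n::int. \<theta> ^ nat \<bar>n\<bar>) summable_on UNIV"
proof (rule nonneg_summable_on_int)
  show "summable (\<lambda>n. \<theta> ^ nat \<bar>int n\<bar>)" using assms by simp
  have "(\<lambda>n::nat. \<theta> ^ nat \<bar>- int n - 1\<bar>) = (\<lambda>n. \<theta> * \<theta> ^ n)"
    by (auto simp: fun_eq_iff nat_add_distrib)
  then show "summable (\<lambda>n::nat. \<theta> ^ nat \<bar>- int n - 1\<bar>)"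
    using assms by (simp add: summable_mult)
qed (use assms in auto)

lemma summable_on_geometric_bound:
  fixes g :: "int \<Rightarrow> 'a::banach"
  assumes "0 \<le> \<theta>" "\<theta> < 1" "\<And>n. norm (g n) \<le> K * \<theta> ^ nat \<bar>n\<bar>"
  shows "g summable_on UNIV"
proof (rule abs_summable_summable)
  show "(\<lambda>n. norm (g n)) summable_on UNIV"
    by (rule summable_on_comparison_test[OF summable_on_cmult_right[OF geometric_summable_on_int]])
       (use assms in auto)
qed

lemma summable_on_shift_int: "(\<lambda>n. f (n + k)) summable_on UNIV \<longleftrightarrow> f summable_on (UNIV::int set)"
proof -
  have "bij_betw (\<lambda>n::int. n + k) UNIV UNIV"
    by (rule bij_betwI[where g = "\<lambda>n. n - k"]) auto
  then show ?thesis using summable_on_reindex_bij_betw[of "\<lambda>n. n + k" UNIV UNIV f] by (simp add: o_def)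
qed

lemma infsum_shift_int: "(\<Sum>\<^sub>\<infinity>n. f (n + k)) = (\<Sum>\<^sub>\<infinity>n::int. f n)"
proof -
  have "bij_betw (\<lambda>n::int. n + k) UNIV UNIV"
    by (rule bij_betwI[where g = "\<lambda>n. n - k"]) auto
  then show ?thesis using infsum_reindex_bij_betw[of "\<lambda>n. n + k" UNIV UNIV f] by simp
qed

lemma powr_add_le_two_powr:
  fixes x y p :: real
  assumes "0 \<le> x" "0 \<le> y" "0 < p"
  shows "(x + y) powr p \<le> 2 powr p * (x powr p + y powr p)"
proof -
  have "(x + y) powr p \<le> (2 * max x y) powr p"
    using assms by (intro powr_mono2) auto
  also have "\<dots> = 2 powr p * max x y powr p"
    using assms by (simp add: powr_mult)
  also have "\<dots> \<le> 2 powr p * (x powr p + y powr p)"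
    by (intro mult_left_mono) (auto simp: max_def)
  finally show ?thesis .
qed

section \<open>Laurent coefficients\<close>

lemma has_contour_integral_powi_circlepath:
  assumes "0 < \<rho>"
  shows "((\<lambda>z::complex. z powi m) has_contour_integral (if m = -1 then 2 * of_real pi * \<i> else 0))
           (circlepath 0 \<rho>)"
proof (cases "m = -1")
  case True
  have "continuous_on (path_image (circlepath 0 \<rho>)) (\<lambda>z::complex. 1 / (z - 0))"
    using assms by (intro continuous_intros) auto
  then have "((\<lambda>z::complex. 1 / (z - 0)) has_contour_integral 2 * of_real pi * \<i>) (circlepath 0 \<rho>)"
    using has_contour_integral_integral[OF contour_integrable_continuous_circlepath]
      contour_integral_circlepath[OF assms, of 0] by metis
  moreover have "(\<lambda>z::complex. z powi m) = (\<lambda>z. 1 / (z - 0))"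
    using True by (auto simp: fun_eq_iff power_int_minus divide_inverse)
  ultimately show ?thesis using True by simp
next
  case False
  then have m1: "(of_int (m + 1) :: complex) \<noteq> 0"
    by (metis add.commute add_eq_0_iff of_int_eq_0_iff)
  have "((\<lambda>z::complex. z powi m) has_contour_integral 0) (circlepath 0 \<rho>)"
  proof (rule Cauchy_theorem_primitive[where S = "- {0}" and f = "\<lambda>z. z powi (m + 1) / of_int (m + 1)"])
    fix x :: complex
    assume "x \<in> - {0}"
    then have D: "((\<lambda>z::complex. z powi (m + 1)) has_field_derivative of_int (m + 1) * x powi m)
                 (at x within - {0})"
      by (auto intro!: derivative_eq_intros)
    show "((\<lambda>z. z powi (m + 1) / of_int (m + 1)) has_field_derivative x powi m) (at x within - {0})"
      using DERIV_cdivide[OF D, of "of_int (m + 1)"] m1 by simp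
  qed (use assms in auto)
  then show ?thesis using False by simp
qed

lemma has_sum_contour_integral_circlepath:
  fixes g :: "'i \<Rightarrow> complex \<Rightarrow> complex"
  assumes \<rho>: "0 < \<rho>"
    and gI: "\<And>n. n \<in> A \<Longrightarrow> (g n has_contour_integral I n) (circlepath c \<rho>)"
    and M: "M summable_on A" "\<And>n z. n \<in> A \<Longrightarrow> z \<in> sphere c \<rho> \<Longrightarrow> norm (g n z) \<le> M n"
  shows "(I has_sum contour_integral (circlepath c \<rho>) (\<lambda>z. \<Sum>\<^sub>\<infinity>n\<in>A. g n z)) A"
proof -
  have ul: "uniform_limit (sphere c \<rho>) (\<lambda>X z. \<Sum>n\<in>X. g n z) (\<lambda>z. \<Sum>\<^sub>\<infinity>n\<in>A. g n z)
              (finite_subsets_at_top A)"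
    using M by (intro Weierstrass_m_test_general) auto
  have ci: "((\<lambda>z. \<Sum>n\<in>X. g n z) has_contour_integral (\<Sum>n\<in>X. I n)) (circlepath c \<rho>)"
    if "finite X" "X \<subseteq> A" for X
    using that gI by (intro has_contour_integral_sum) auto
  then have "\<forall>\<^sub>F X in finite_subsets_at_top A. (\<lambda>z. \<Sum>n\<in>X. g n z) contour_integrable_on circlepath c \<rho>"
    by (intro eventually_finite_subsets_at_top_weakI) (auto intro: has_contour_integral_integrable)
  note lim = contour_integral_uniform_limit_circlepath[OF this ul _ \<rho>]
  show ?thesis
    unfolding has_sum_def
  proof (rule Lim_transform_eventually[OF lim(2)])
    show "\<forall>\<^sub>F X in finite_subsets_at_top A. contour_integral (circlepath c \<rho>) (\<lambda>z. \<Sum>n\<in>X. g n z) = sum I X"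
      by (rule eventually_finite_subsets_at_top_weakI) (use ci contour_integral_unique in auto)
  qed simp
qed

lemma contour_integral_circlepath_laurent_series:
  fixes d :: "int \<Rightarrow> complex" and \<rho> :: real
  assumes \<rho>: "0 < \<rho>" and summ: "(\<lambda>n. norm (d n) * \<rho> powi n) summable_on UNIV"
    and F: "\<And>z. z \<in> sphere 0 \<rho> \<Longrightarrow> F z = (\<Sum>\<^sub>\<infinity>n. d n * z powi n)"
  shows "contour_integral (circlepath 0 \<rho>) (\<lambda>z. F z / z powi (k + 1)) = 2 * of_real pi * \<i> * d k"
proof -
  define g where "g n z = d n * z powi (n - (k + 1))" for n z
  define I where "I n = d n * (if n - (k + 1) = -1 then 2 * of_real pi * \<i> else 0)" for n
  have "(I has_sum contour_integral (circlepath 0 \<rho>) (\<lambda>z. \<Sum>\<^sub>\<infinity>n. g n z)) UNIV"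
  proof (rule has_sum_contour_integral_circlepath[OF \<rho>])
    show "(g n has_contour_integral I n) (circlepath 0 \<rho>)" for n
      unfolding g_def I_def by (intro has_contour_integral_lmul has_contour_integral_powi_circlepath \<rho>)
    show "(\<lambda>n. norm (d n) * \<rho> powi n * \<rho> powi (- (k + 1))) summable_on UNIV"
      by (intro summable_on_cmult_left summ)
    show "norm (g n z) \<le> norm (d n) * \<rho> powi n * \<rho> powi (- (k + 1))" if "z \<in> sphere 0 \<rho>" for n z
      using that \<rho> by (simp add: g_def norm_mult norm_power_int power_int_diff power_int_minus
                          power_int_add divide_inverse)
  qed
  moreover have "(I has_sum (2 * of_real pi * \<i> * d k)) UNIV"
  proof -
    have "(I has_sum (2 * of_real pi * \<i> * d k)) {k}"
      by (rule has_sum_finiteI) (auto simp: I_def)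
    then show ?thesis
      by (subst has_sum_cong_neutral[where T = "{k}"]) (auto simp: I_def)
  qed
  ultimately have "contour_integral (circlepath 0 \<rho>) (\<lambda>z. \<Sum>\<^sub>\<infinity>n. g n z) = 2 * of_real pi * \<i> * d k"
    using has_sum_unique by blast
  moreover have "contour_integral (circlepath 0 \<rho>) (\<lambda>z. F z / z powi (k + 1))
               = contour_integral (circlepath 0 \<rho>) (\<lambda>z. \<Sum>\<^sub>\<infinity>n. g n z)"
  proof (rule contour_integral_eq)
    fix z
    assume "z \<in> path_image (circlepath 0 \<rho>)"
    then have z: "z \<in> sphere 0 \<rho>" "z \<noteq> 0" using \<rho> by auto
    have "F z / z powi (k + 1) = (\<Sum>\<^sub>\<infinity>n. d n * z powi n * inverse (z powi (k + 1)))"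
      using F[OF z(1)] by (simp add: divide_inverse infsum_cmult_left')
    also have "\<dots> = (\<Sum>\<^sub>\<infinity>n. g n z)"
      using z by (intro infsum_cong) (simp add: g_def power_int_diff divide_inverse)
    finally show "F z / z powi (k + 1) = (\<Sum>\<^sub>\<infinity>n. g n z)" .
  qed
  ultimately show ?thesis by simp
qed

lemma rad_in_nonneg: "0 \<le> rad_in a b"
  unfolding rad_in_def by (rule le_Limsup) (auto intro!: always_eventually real_root_ge_zero)

lemma laurent_coeff_eqI:
  assumes "rad_in a b < rad_out a b"
    and F: "\<And>z. z \<in> Omega a b \<Longrightarrow> f z = (\<Sum>\<^sub>\<infinity>n. d n * z powi n)"
    and summ: "\<And>\<rho>. rad_in a b < ereal \<rho> \<Longrightarrow> ereal \<rho> < rad_out a b \<Longrightarrow>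
                 (\<lambda>n. norm (d n) * \<rho> powi n) summable_on UNIV"
  shows "laurent_coeff a b f k = d k"
proof -
  let ?P = "\<lambda>\<rho>::real. 0 < \<rho> \<and> rad_in a b < ereal \<rho> \<and> ereal \<rho> < rad_out a b"
  define \<rho> where "\<rho> = (SOME \<rho>. ?P \<rho>)"
  obtain \<rho>' where "rad_in a b < ereal \<rho>'" "ereal \<rho>' < rad_out a b"
    using ereal_dense2[OF assms(1)] by blast
  moreover have "0 < \<rho>'"
    using rad_in_nonneg[of a b] calculation(1) by (metis ereal_less(2) order.strict_trans1)
  ultimately have \<rho>: "?P \<rho>"
    unfolding \<rho>_def by (intro someI[of ?P \<rho>']) auto
  have "sphere 0 \<rho> \<subseteq> Omega a b"
    using \<rho> by (auto simp: Omega_def annulus_def)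
  then have "contour_integral (circlepath 0 \<rho>) (\<lambda>z. f z / z powi (k + 1)) = 2 * of_real pi * \<i> * d k"
    using \<rho> by (intro contour_integral_circlepath_laurent_series summ F) auto
  then show ?thesis by (simp add: laurent_coeff_def \<rho>_def)
qed

section \<open>Representations in \<open>\<ell>\<^sup>p\<^sub>a\<^sub>,\<^sub>b\<close>\<close>

lemma lpnorm_nonneg: "0 \<le> lpnorm p x"
  by (simp add: lpnorm_def)

lemma norm_powr_le_lp_sum:
  assumes "x \<in> lp p"
  shows "cmod (x k) powr p \<le> (\<Sum>\<^sub>\<infinity>n. cmod (x n) powr p)"
proof -
  have "cmod (x k) powr p = (\<Sum>\<^sub>\<infinity>n\<in>{k}. cmod (x n) powr p)" by simp
  also have "\<dots> \<le> (\<Sum>\<^sub>\<infinity>n. cmod (x n) powr p)"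
    using assms by (intro infsum_mono2) (auto simp: lp_def)
  finally show ?thesis .
qed

lemma norm_le_lpnorm:
  assumes "x \<in> lp p" "0 < p"
  shows "cmod (x k) \<le> lpnorm p x"
proof -
  have "(cmod (x k) powr p) powr (1 / p) \<le> (\<Sum>\<^sub>\<infinity>n. cmod (x n) powr p) powr (1 / p)"
    using assms by (intro powr_mono2 norm_powr_le_lp_sum) auto
  then show ?thesis using assms by (simp add: lpnorm_def powr_powr)
qed

lemma lp_dominated:
  assumes "0 < p" "G summable_on UNIV" "\<And>m. cmod (x m) powr p \<le> G m"
  shows "x \<in> lp p" and "lpnorm p x \<le> infsum G UNIV powr (1 / p)"
proof -
  have sx: "(\<lambda>m. cmod (x m) powr p) summable_on UNIV"
    using assms by (intro summable_on_comparison_test[OF assms(2)]) auto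
  then show "x \<in> lp p" by (simp add: lp_def)
  show "lpnorm p x \<le> infsum G UNIV powr (1 / p)"
    unfolding lpnorm_def using assms infsum_mono[OF sx assms(2)]
    by (intro powr_mono2) (auto intro: infsum_nonneg)
qed

lemma lp_cmult: "x \<in> lp p \<Longrightarrow> (\<lambda>n. c * x n) \<in> lp p"
  by (simp add: lp_def norm_mult powr_mult summable_on_cmult_right)

lemma represents_zero: "represents p a b (\<lambda>n. 0) (\<lambda>z. 0)"
  by (simp add: represents_def lp_def)

lemma represents_cmult:
  assumes "represents p a b l f"
  shows "represents p a b (\<lambda>n. c * l n) (\<lambda>z. c * f z)"
  using assms
  by (auto simp: represents_def lp_cmult mult.assoc infsum_cmult_right' intro!: summable_on_cmult_right)

lemma represents_fun_unique: "represents p a b l f \<Longrightarrow> represents p a b l g \<Longrightarrow> f = g"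
  by (auto simp: represents_def fun_eq_iff)

lemma lpab_cmult: "f \<in> lpab p a b \<Longrightarrow> (\<lambda>z. c * f z) \<in> lpab p a b"
  unfolding lpab_def using represents_cmult by blast

lemma lpab_norm_le_if_represents:
  assumes "f \<in> lpab p a b" "0 < C"
    and reps: "\<And>l. represents p a b l f \<Longrightarrow> \<exists>l'. represents p a b l' g \<and> lpnorm p l' \<le> C * lpnorm p l"
  shows "lpab_norm p a b g \<le> C * lpab_norm p a b f"
proof -
  define S where "S = {lpnorm p l | l. represents p a b l f}"
  have "S \<noteq> {}" using assms(1) by (auto simp: S_def lpab_def)
  moreover have "lpab_norm p a b g / C \<le> s" if "s \<in> S" for s
  proof -
    obtain l where s: "s = lpnorm p l" and l: "represents p a b l f"
      using \<open>s \<in> S\<close> by (auto simp: S_def)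
    obtain l' where l': "represents p a b l' g" "lpnorm p l' \<le> C * lpnorm p l"
      using reps[OF l] by blast
    have "lpab_norm p a b g \<le> lpnorm p l'"
      unfolding lpab_norm_def using l'(1)
      by (intro cInf_lower) (auto intro: bdd_belowI[where m = 0] simp: lpnorm_nonneg)
    then show ?thesis using l'(2) \<open>0 < C\<close> by (simp add: s field_simps)
  qed
  ultimately have "lpab_norm p a b g / C \<le> Inf S"
    by (rule cInf_greatest)
  then show ?thesis using \<open>0 < C\<close> by (simp add: lpab_norm_def S_def field_simps)
qed

text \<open>Laurent coefficients of \<open>\<Sum> l\<^sub>n f\<^sub>n\<close>: the part \<open>b\<^sub>n z\<^sup>n\<^sup>+\<^sup>1\<close> of \<open>f\<^sub>n\<close> lands in the next one.\<close>
definition block_coeff :: "(int \<Rightarrow> complex) \<Rightarrow> (int \<Rightarrow> complex) \<Rightarrow> (int \<Rightarrow> complex) \<Rightarrow> int \<Rightarrow> complex" where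
  "block_coeff a b l k = a k * l k + b (k - 1) * l (k - 1)"

lemma fblock_series_eq_laurent_series:
  assumes "z \<noteq> 0"
    and sa: "(\<lambda>n. a n * l n * z powi n) summable_on UNIV"
    and sb: "(\<lambda>n. b (n - 1) * l (n - 1) * z powi n) summable_on UNIV"
  shows "(\<lambda>n. l n * fblock a b n z) summable_on UNIV"
    and "(\<lambda>n. block_coeff a b l n * z powi n) summable_on UNIV"
    and "(\<Sum>\<^sub>\<infinity>n. l n * fblock a b n z) = (\<Sum>\<^sub>\<infinity>n. block_coeff a b l n * z powi n)"
proof -
  define B where "B n = b (n - 1) * l (n - 1) * z powi n" for n
  have sB: "B summable_on UNIV"
    using sb by (simp add: B_def[abs_def])
  then have sB': "(\<lambda>n. B (n + 1)) summable_on UNIV"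
    by (simp add: summable_on_shift_int)
  have split: "l n * fblock a b n z = a n * l n * z powi n + B (n + 1)" for n
    using assms(1) by (simp add: fblock_def B_def power_int_add algebra_simps)
  have coeff: "block_coeff a b l n * z powi n = a n * l n * z powi n + B n" for n
    by (simp add: block_coeff_def B_def algebra_simps)
  show "(\<lambda>n. l n * fblock a b n z) summable_on UNIV"
    unfolding split by (intro summable_on_add sa sB')
  show "(\<lambda>n. block_coeff a b l n * z powi n) summable_on UNIV"
    unfolding coeff by (intro summable_on_add sa sB)
  show "(\<Sum>\<^sub>\<infinity>n. l n * fblock a b n z) = (\<Sum>\<^sub>\<infinity>n. block_coeff a b l n * z powi n)"
    unfolding split coeff infsum_add[OF sa sB'] infsum_add[OF sa sB] infsum_shift_int ..
qed

section \<open>Similarity to a weighted backward shift\<close>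

definition alternate :: "(int \<Rightarrow> complex) \<Rightarrow> int \<Rightarrow> complex" where
  "alternate x m = (if even m then 1 else -1) * x m"

lemma norm_alternate [simp]: "cmod (alternate x m) = cmod (x m)"
  by (simp add: alternate_def norm_mult)

lemma lp_alternate: "x \<in> lp p \<Longrightarrow> alternate x \<in> lp p"
  by (simp add: lp_def)

lemma alternate_eq_0_iff: "alternate x = (\<lambda>m. 0) \<longleftrightarrow> x = (\<lambda>m. 0)"
  by (auto simp: alternate_def fun_eq_iff split: if_splits)

lemma wshift_alternate:
  assumes "wshift \<alpha> x = x"
  shows "wshift \<alpha> (alternate x) = (\<lambda>m. - alternate x m)"
proof
  fix m
  have "wshift \<alpha> (alternate x) m = (if even (m + 1) then 1 else -1) * wshift \<alpha> x m"
    by (simp add: wshift_def alternate_def)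
  then show "wshift \<alpha> (alternate x) m = - alternate x m"
    using assms by (simp add: alternate_def)
qed

text \<open>A weighted backward shift with eigenvalue \<open>1\<close> also has eigenvalue \<open>-1\<close>, and similarity
  transports eigenvectors.\<close>
lemma similar_to_shift_neg_eigenvector:
  assumes sim: "Bw_similar_to_shift p a b w"
    and closed: "\<And>f. f \<in> lpab p a b \<Longrightarrow> Bw a b w f \<in> lpab p a b"
    and g: "g \<in> lpab p a b" "Bw a b w g = g" "g \<noteq> (\<lambda>z. 0)"
  obtains h where "h \<in> lpab p a b" "Bw a b w h = (\<lambda>z. - h z)" "h \<noteq> (\<lambda>z. 0)"
proof -
  let ?L = "lpab p a b" and ?T = "Bw a b w"
  obtain \<alpha> J where bij: "bij_betw J ?L (lp p)"
    and hom: "\<And>c f. f \<in> ?L \<Longrightarrow> J (\<lambda>z. c * f z) = (\<lambda>n. c * J f n)"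
    and intertw: "\<And>f. f \<in> ?L \<Longrightarrow> J (?T f) = wshift \<alpha> (J f)"
    using sim unfolding Bw_similar_to_shift_def by blast
  have inj: "inj_on J ?L" and img: "J ` ?L = lp p"
    using bij by (auto simp: bij_betw_def)
  have zero: "(\<lambda>z. 0) \<in> ?L" and J0: "J (\<lambda>z. 0) = (\<lambda>n. 0)"
    using lpab_cmult[OF g(1), of 0] hom[OF g(1), of 0] by simp_all
  define x where "x = J g"
  have "wshift \<alpha> x = x"
    using intertw[OF g(1)] g(2) by (simp add: x_def)
  then have y: "wshift \<alpha> (alternate x) = (\<lambda>m. - alternate x m)"
    by (rule wshift_alternate)
  have "x \<noteq> (\<lambda>n. 0)"
    using g inj zero J0 by (metis inj_onD x_def)
  then have y0: "alternate x \<noteq> (\<lambda>n. 0)"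
    by (simp add: alternate_eq_0_iff)
  have "alternate x \<in> lp p"
    using img g(1) by (auto simp: x_def intro: lp_alternate)
  then obtain h where h: "h \<in> ?L" "J h = alternate x"
    using img by (metis imageE)
  have "J (?T h) = J (\<lambda>z. (-1) * h z)"
    using intertw[OF h(1)] hom[OF h(1), of "-1"] y h(2) by simp
  then have "?T h = (\<lambda>z. (-1) * h z)"
    using inj closed[OF h(1)] lpab_cmult[OF h(1)] h(1) by (meson inj_onD)
  moreover have "h \<noteq> (\<lambda>z. 0)"
    using h(2) J0 y0 by auto
  ultimately show ?thesis using that h(1) by simp
qed

section \<open>The example\<close>

definition ex_P :: "real \<Rightarrow> int \<Rightarrow> real" where
  "ex_P p n = (if n < 0 then 1 else (real_of_int n + 1) powr (1 + 1 / p))"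

definition ex_a :: "int \<Rightarrow> complex" where
  "ex_a n = (if n < 0 then (1 / 2) ^ nat (- n) else 1)"

definition ex_b :: "real \<Rightarrow> int \<Rightarrow> complex" where
  "ex_b p n = (if n < 0 then 0 else of_real (ex_P p n / ex_P p (n + 1)))"

definition ex_w :: "real \<Rightarrow> int \<Rightarrow> complex" where
  "ex_w p n = (if n \<le> 0 then 0 else of_real (ex_P p n / ex_P p (n - 1)))"

lemma ex_P_pos: "0 < ex_P p n"
  by (simp add: ex_P_def)

lemma ex_P_0 [simp]: "ex_P p 0 = 1"
  by (simp add: ex_P_def)

lemma ex_P_le_succ: "0 < p \<Longrightarrow> 0 \<le> n \<Longrightarrow> ex_P p n \<le> ex_P p (n + 1)"
  by (auto simp: ex_P_def intro!: powr_mono2)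

lemma ex_P_succ_le:
  assumes "1 \<le> p" "0 \<le> n"
  shows "ex_P p (n + 1) \<le> 4 * ex_P p n"
proof -
  have e: "0 \<le> 1 + 1 / p" "1 + 1 / p \<le> 2" using assms by (auto simp: field_simps)
  have "ex_P p (n + 1) = (real_of_int n + 2) powr (1 + 1 / p)"
    using assms by (simp add: ex_P_def add.commute add.left_commute)
  also have "\<dots> \<le> (2 * (real_of_int n + 1)) powr (1 + 1 / p)"
    using assms e by (intro powr_mono2) auto
  also have "\<dots> = 2 powr (1 + 1 / p) * ex_P p n"
    using assms by (simp add: ex_P_def powr_mult[symmetric])
  also have "\<dots> \<le> 2 powr 2 * ex_P p n"
    using e ex_P_pos[of p n] assms by (intro mult_right_mono powr_mono) auto
  finally show ?thesis by simp
qed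

lemma ex_P_powr:
  assumes "0 < p" "0 \<le> n"
  shows "ex_P p n powr p = (real_of_int n + 1) powr (p + 1)"
proof -
  have "(1 + 1 / p) * p = p + 1" using assms by (simp add: field_simps)
  with assms show ?thesis by (simp add: ex_P_def powr_powr)
qed

lemma ex_a_nonzero: "ex_a n \<noteq> 0"
  by (simp add: ex_a_def)

lemma norm_ex_b_le_1: "0 < p \<Longrightarrow> cmod (ex_b p n) \<le> 1"
  using ex_P_le_succ[of p n] ex_P_pos[of p n] ex_P_pos[of p "n + 1"]
  by (auto simp: ex_b_def norm_divide)

lemma rad_in_ex: "rad_in ex_a (ex_b p) = ereal (1 / 2)"
proof -
  have "\<forall>\<^sub>F n in sequentially. ereal (1 / 2) = ereal (root n (cmod (ex_a (- int n)) + cmod (ex_b p (- int n))))"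
    using eventually_gt_at_top[of "0::nat"]
    by eventually_elim (simp add: ex_a_def ex_b_def norm_power real_root_pos2)
  then have "((\<lambda>n. ereal (root n (cmod (ex_a (- int n)) + cmod (ex_b p (- int n))))) \<longlongrightarrow> ereal (1 / 2)) sequentially"
    by (rule Lim_transform_eventually[OF tendsto_const])
  then show ?thesis unfolding rad_in_def by (intro lim_imp_Limsup) auto
qed

lemma inv_rad_out_ex:
  assumes "0 < p"
  shows "inv_rad_out ex_a (ex_b p) = 1"
proof -
  have "(\<lambda>n. root n (cmod (ex_a (int n)) + cmod (ex_b p (int n)))) \<longlonglongrightarrow> 1"
  proof (rule real_tendsto_sandwich[OF _ _ tendsto_const LIMSEQ_root_const[of 2]])
    show "\<forall>\<^sub>F n in sequentially. 1 \<le> root n (cmod (ex_a (int n)) + cmod (ex_b p (int n)))"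
      using eventually_gt_at_top[of "0::nat"] by eventually_elim (simp add: ex_a_def)
    show "\<forall>\<^sub>F n in sequentially. root n (cmod (ex_a (int n)) + cmod (ex_b p (int n))) \<le> root n 2"
      using eventually_gt_at_top[of "0::nat"]
      by eventually_elim (use norm_ex_b_le_1[OF assms] in \<open>simp add: ex_a_def\<close>)
  qed auto
  then have "((\<lambda>n. ereal (root n (cmod (ex_a (int n)) + cmod (ex_b p (int n))))) \<longlongrightarrow> ereal 1) sequentially"
    by (simp add: lim_ereal)
  then show ?thesis unfolding inv_rad_out_def one_ereal_def by (intro lim_imp_Limsup) auto
qed

lemma rad_out_ex: "0 < p \<Longrightarrow> rad_out ex_a (ex_b p) = 1"
  by (simp add: rad_out_def inv_rad_out_ex)

lemma mem_Omega_ex: "0 < p \<Longrightarrow> z \<in> Omega ex_a (ex_b p) \<longleftrightarrow> 1 / 2 < cmod z \<and> cmod z < 1"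
  by (simp add: Omega_def annulus_def rad_in_ex rad_out_ex one_ereal_def)

lemma admissible_ex: "0 < p \<Longrightarrow> admissible ex_a (ex_b p)"
  by (auto simp: admissible_def ex_a_nonzero inv_rad_out_ex rad_in_ex rad_out_ex ex_b_def one_ereal_def)

text \<open>\<open>|a\<^sub>n| r\<^sup>n\<close> is \<open>(2r)\<^sup>n\<close> for \<open>n < 0\<close> and \<open>r\<^sup>n\<close> for \<open>n \<ge> 0\<close>, so on \<open>1/2 < r < 1\<close> both tails decay
  geometrically with this ratio.\<close>
definition ex_decay :: "real \<Rightarrow> real" where
  "ex_decay r = max r (1 / (2 * r))"

lemma ex_decay_bounds:
  assumes "1 / 2 < r" "r < 1"
  shows "0 \<le> ex_decay r" "ex_decay r < 1"
  using assms by (auto simp: ex_decay_def field_simps)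

lemma norm_ex_a_powi_le:
  assumes "1 / 2 < r" "r < 1"
  shows "cmod (ex_a n) * r powi n \<le> ex_decay r ^ nat \<bar>n\<bar>"
proof (cases "n < 0")
  case True
  then obtain k where n: "n = - int k" by (metis less_imp_le minus_minus neg_0_le_iff_le nonneg_int_cases)
  have "cmod (ex_a n) * r powi n = (1 / (2 * r)) ^ k"
    using True assms by (simp add: ex_a_def n norm_power norm_divide power_int_minus power_divide field_simps)
  also have "\<dots> \<le> ex_decay r ^ k"
    using assms by (intro power_mono) (auto simp: ex_decay_def)
  finally show ?thesis by (simp add: n)
next
  case False
  then obtain k where n: "n = int k" by (metis nonneg_int_cases not_less)
  have "cmod (ex_a n) * r powi n = r ^ k" using False by (simp add: ex_a_def n)
  also have "\<dots> \<le> ex_decay r ^ k"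
    using assms by (intro power_mono) (auto simp: ex_decay_def)
  finally show ?thesis by (simp add: n)
qed

lemma norm_ex_b_powi_le:
  assumes "1 / 2 < r" "r < 1" "0 < p"
  shows "cmod (ex_b p (n - 1)) * r powi n \<le> ex_decay r ^ nat \<bar>n\<bar>"
proof (cases "n \<le> 0")
  case True
  then show ?thesis using ex_decay_bounds[OF assms(1,2)] by (simp add: ex_b_def)
next
  case False
  then obtain k where n: "n = int k" by (metis nonneg_int_cases not_less less_imp_le not_le)
  have "cmod (ex_b p (n - 1)) * r powi n \<le> 1 * r ^ k"
    using assms norm_ex_b_le_1[OF assms(3), of "n - 1"] by (intro mult_mono) (auto simp: n)
  also have "\<dots> \<le> ex_decay r ^ k"
    using assms by (auto simp: ex_decay_def intro!: power_mono)
  finally show ?thesis by (simp add: n)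
qed

lemma ex_coeff_parts_bound:
  assumes r: "1 / 2 < r" "r < 1" and p: "0 < p" and l: "l \<in> lp p"
  shows "cmod (ex_a n * l n) * r powi n \<le> lpnorm p l * ex_decay r ^ nat \<bar>n\<bar>"
    and "cmod (ex_b p (n - 1) * l (n - 1)) * r powi n \<le> lpnorm p l * ex_decay r ^ nat \<bar>n\<bar>"
proof -
  have decay: "0 \<le> ex_decay r ^ nat \<bar>n\<bar>" using ex_decay_bounds[OF r] by simp
  have "cmod (ex_a n * l n) * r powi n = (cmod (ex_a n) * r powi n) * cmod (l n)"
    by (simp add: norm_mult)
  also have "\<dots> \<le> ex_decay r ^ nat \<bar>n\<bar> * lpnorm p l"
    using norm_ex_a_powi_le[OF r] norm_le_lpnorm[OF l p] decay by (intro mult_mono) auto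
  finally show "cmod (ex_a n * l n) * r powi n \<le> lpnorm p l * ex_decay r ^ nat \<bar>n\<bar>"
    by (simp add: mult.commute)
  have "cmod (ex_b p (n - 1) * l (n - 1)) * r powi n = (cmod (ex_b p (n - 1)) * r powi n) * cmod (l (n - 1))"
    by (simp add: norm_mult)
  also have "\<dots> \<le> ex_decay r ^ nat \<bar>n\<bar> * lpnorm p l"
    using norm_ex_b_powi_le[OF r p] norm_le_lpnorm[OF l p] decay by (intro mult_mono) auto
  finally show "cmod (ex_b p (n - 1) * l (n - 1)) * r powi n \<le> lpnorm p l * ex_decay r ^ nat \<bar>n\<bar>"
    by (simp add: mult.commute)
qed

lemma ex_fblock_series:
  assumes p: "0 < p" and l: "l \<in> lp p" and z: "z \<in> Omega ex_a (ex_b p)"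
  shows "(\<lambda>n. l n * fblock ex_a (ex_b p) n z) summable_on UNIV"
    and "(\<lambda>n. block_coeff ex_a (ex_b p) l n * z powi n) summable_on UNIV"
    and "(\<Sum>\<^sub>\<infinity>n. l n * fblock ex_a (ex_b p) n z) = (\<Sum>\<^sub>\<infinity>n. block_coeff ex_a (ex_b p) l n * z powi n)"
proof -
  have r: "1 / 2 < cmod z" "cmod z < 1" using z p by (simp_all add: mem_Omega_ex)
  note bound = ex_coeff_parts_bound[OF r p l] and decay = ex_decay_bounds[OF r]
  have "z \<noteq> 0" using r by auto
  moreover have "(\<lambda>n. ex_a n * l n * z powi n) summable_on UNIV"
    using decay bound(1) by (intro summable_on_geometric_bound) (auto simp: norm_mult norm_power_int)
  moreover have "(\<lambda>n. ex_b p (n - 1) * l (n - 1) * z powi n) summable_on UNIV"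
    using decay bound(2) by (intro summable_on_geometric_bound) (auto simp: norm_mult norm_power_int)
  ultimately show "(\<lambda>n. l n * fblock ex_a (ex_b p) n z) summable_on UNIV"
    and "(\<lambda>n. block_coeff ex_a (ex_b p) l n * z powi n) summable_on UNIV"
    and "(\<Sum>\<^sub>\<infinity>n. l n * fblock ex_a (ex_b p) n z) = (\<Sum>\<^sub>\<infinity>n. block_coeff ex_a (ex_b p) l n * z powi n)"
    using fblock_series_eq_laurent_series by blast+
qed

lemma ex_laurent_coeff:
  assumes p: "0 < p" and rep: "represents p ex_a (ex_b p) l f"
  shows "laurent_coeff ex_a (ex_b p) f k = block_coeff ex_a (ex_b p) l k"
proof (rule laurent_coeff_eqI)
  have l: "l \<in> lp p" using rep by (simp add: represents_def)
  show "rad_in ex_a (ex_b p) < rad_out ex_a (ex_b p)"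
    using admissible_ex[OF p] by (simp add: admissible_def)
  show "f z = (\<Sum>\<^sub>\<infinity>n. block_coeff ex_a (ex_b p) l n * z powi n)" if "z \<in> Omega ex_a (ex_b p)" for z
    using rep that ex_fblock_series(3)[OF p l that] by (simp add: represents_def)
  show "(\<lambda>n. norm (block_coeff ex_a (ex_b p) l n) * \<rho> powi n) summable_on UNIV"
    if "rad_in ex_a (ex_b p) < ereal \<rho>" "ereal \<rho> < rad_out ex_a (ex_b p)" for \<rho>
  proof (rule summable_on_geometric_bound)
    have r: "1 / 2 < \<rho>" "\<rho> < 1" using that p by (simp_all add: rad_in_ex rad_out_ex)
    note bound = ex_coeff_parts_bound[OF r p l]
    show "0 \<le> ex_decay \<rho>" "ex_decay \<rho> < 1" by (rule ex_decay_bounds[OF r])+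
    show "norm (norm (block_coeff ex_a (ex_b p) l n) * \<rho> powi n)
          \<le> 2 * lpnorm p l * ex_decay \<rho> ^ nat \<bar>n\<bar>" for n
    proof -
      have "norm (norm (block_coeff ex_a (ex_b p) l n) * \<rho> powi n)
            = cmod (ex_a n * l n + ex_b p (n - 1) * l (n - 1)) * \<rho> powi n"
        using r by (simp add: block_coeff_def abs_mult)
      also have "\<dots> \<le> (cmod (ex_a n * l n) + cmod (ex_b p (n - 1) * l (n - 1))) * \<rho> powi n"
        using r by (intro mult_right_mono norm_triangle_ineq) auto
      finally have "norm (norm (block_coeff ex_a (ex_b p) l n) * \<rho> powi n)
            \<le> cmod (ex_a n * l n) * \<rho> powi n + cmod (ex_b p (n - 1) * l (n - 1)) * \<rho> powi n"
        by (simp add: distrib_right)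
      then show ?thesis using bound[of n] by simp
    qed
  qed
qed

lemma ex_block_coeff_inj:
  assumes "block_coeff ex_a (ex_b p) l = block_coeff ex_a (ex_b p) l'"
  shows "l = l'"
proof -
  have eq: "block_coeff ex_a (ex_b p) l k = block_coeff ex_a (ex_b p) l' k" for k
    using assms by simp
  have neg: "l k = l' k" if "k < 0" for k
    using eq[of k] that ex_a_nonzero[of k] by (simp add: block_coeff_def ex_b_def)
  have nonneg: "l (int n) = l' (int n)" for n
  proof (induction n)
    case 0
    then show ?case using eq[of 0] by (simp add: block_coeff_def ex_b_def ex_a_def)
  next
    case (Suc n)
    then show ?case using eq[of "int n + 1"] by (simp add: block_coeff_def ex_a_def add.commute)
  qed
  show ?thesis
  proof
    fix k :: int
    show "l k = l' k"
    proof (cases "k < 0")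
      case False
      then obtain n where "k = int n" by (metis nonneg_int_cases not_less)
      then show ?thesis using nonneg by simp
    qed (rule neg)
  qed
qed

lemma ex_represents_unique:
  assumes "0 < p" "represents p ex_a (ex_b p) l f" "represents p ex_a (ex_b p) l' f"
  shows "l = l'"
proof (rule ex_block_coeff_inj)
  show "block_coeff ex_a (ex_b p) l = block_coeff ex_a (ex_b p) l'"
  proof
    fix k
    show "block_coeff ex_a (ex_b p) l k = block_coeff ex_a (ex_b p) l' k"
      using ex_laurent_coeff[OF assms(1,2), of k] ex_laurent_coeff[OF assms(1,3), of k] by simp
  qed
qed

text \<open>The coefficient sequence of \<open>B\<^sub>w f\<close> in terms of that of \<open>f\<close>; the alternating \<open>l\<^sub>0\<close> terms
  telescope against the \<open>b\<close>-parts of the blocks \<open>f\<^sub>n\<close>.\<close>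
definition ex_shift_coeff :: "real \<Rightarrow> (int \<Rightarrow> complex) \<Rightarrow> int \<Rightarrow> complex" where
  "ex_shift_coeff p l m = (if m < 0 then 0 else
     (of_real (ex_P p (m + 1)) * l (m + 1) + (-1) ^ nat m * l 0) / of_real (ex_P p m))"

lemma ex_block_coeff_shift_coeff:
  "block_coeff ex_a (ex_b p) (ex_shift_coeff p l) m = ex_w p (m + 1) * block_coeff ex_a (ex_b p) l (m + 1)"
proof -
  have nz: "complex_of_real (ex_P p k) \<noteq> 0" for k using ex_P_pos[of p k] by simp
  have "m < 0 \<or> m = 0 \<or> m = int (nat (m - 1)) + 1" by auto
  then consider "m < 0" | "m = 0" | k where "m = int k + 1" by blast
  then show ?thesis
  proof cases
    case 1
    then show ?thesis by (simp add: block_coeff_def ex_shift_coeff_def ex_b_def ex_w_def)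
  next
    case 2
    then show ?thesis using nz[of 1]
      by (simp add: block_coeff_def ex_shift_coeff_def ex_b_def ex_a_def ex_w_def field_simps)
  next
    case 3
    define A where "A = complex_of_real (ex_P p (m + 1))"
    define B where "B = complex_of_real (ex_P p m)"
    define C where "C = complex_of_real (ex_P p (m - 1))"
    define s where "s = ((-1) ^ k :: complex)"
    have nm: "nat m = Suc k" "nat (m - 1) = k" "\<not> m < 0" "\<not> m < 1" "\<not> m + 1 \<le> 0" "\<not> m + 1 < 0"
      using 3 by auto
    have ABC: "A \<noteq> 0" "B \<noteq> 0" "C \<noteq> 0" using nz by (simp_all add: A_def B_def C_def)
    have T: "ex_shift_coeff p l m = (A * l (m + 1) - s * l 0) / B"
            "ex_shift_coeff p l (m - 1) = (B * l m + s * l 0) / C"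
      by (simp_all add: ex_shift_coeff_def nm A_def B_def C_def s_def)
    have ab: "ex_b p (m - 1) = C / B" "ex_w p (m + 1) = A / B" "ex_b p m = B / A"
             "ex_a m = 1" "ex_a (m + 1) = 1"
      by (simp_all add: ex_a_def ex_b_def ex_w_def nm A_def B_def C_def)
    have "block_coeff ex_a (ex_b p) (ex_shift_coeff p l) m
          = (A * l (m + 1) - s * l 0) / B + C / B * ((B * l m + s * l 0) / C)"
      by (simp add: block_coeff_def ab T)
    also have "\<dots> = A / B * (l (m + 1) + B / A * l m)"
      using ABC by (simp add: field_simps)
    also have "\<dots> = ex_w p (m + 1) * block_coeff ex_a (ex_b p) l (m + 1)"
      by (simp add: block_coeff_def ab)
    finally show ?thesis .
  qed
qed

definition ex_P_inv_powr :: "real \<Rightarrow> int \<Rightarrow> real" where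
  "ex_P_inv_powr p m = (if m < 0 then 0 else (1 / ex_P p m) powr p)"

lemma ex_P_inv_powr_summable:
  assumes p: "0 < p"
  shows "ex_P_inv_powr p summable_on UNIV"
proof (rule nonneg_summable_on_int)
  have "ex_P_inv_powr p (int n) = real (Suc n) powr (- (p + 1))" for n
  proof -
    have "ex_P_inv_powr p (int n) = inverse (ex_P p (int n) powr p)"
      by (simp add: ex_P_inv_powr_def divide_inverse inverse_powr)
    also have "\<dots> = inverse (real (Suc n) powr (p + 1))"
      using ex_P_powr[OF p, of "int n"] by (simp add: add.commute)
    finally show ?thesis by (simp add: powr_minus[symmetric] add.commute)
  qed
  moreover have "summable (\<lambda>n. real (Suc n) powr (- (p + 1)))"
    using summable_Suc_iff[where f = "\<lambda>n. real n powr (- (p + 1))"] summable_real_powr_iff p by simp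
  ultimately show "summable (\<lambda>n. ex_P_inv_powr p (int n))" by simp
qed (simp_all add: ex_P_inv_powr_def)

lemma ex_shift_coeff_powr_le:
  assumes p: "1 \<le> p"
  shows "cmod (ex_shift_coeff p l m) powr p
         \<le> 2 powr p * (4 powr p * cmod (l (m + 1)) powr p + cmod (l 0) powr p * ex_P_inv_powr p m)"
proof (cases "m < 0")
  case True
  then show ?thesis by (simp add: ex_shift_coeff_def ex_P_inv_powr_def)
next
  case False
  have Pm: "0 < ex_P p m" by (rule ex_P_pos)
  have "cmod (of_real (ex_P p (m + 1)) * l (m + 1) + (-1) ^ nat m * l 0)
        \<le> cmod (of_real (ex_P p (m + 1)) * l (m + 1)) + cmod ((-1) ^ nat m * l 0)"
    by (rule norm_triangle_ineq)
  also have "\<dots> = ex_P p (m + 1) * cmod (l (m + 1)) + cmod (l 0)"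
    using ex_P_pos[of p "m + 1"] p by (simp add: norm_mult norm_power)
  finally have "cmod (ex_shift_coeff p l m) \<le> (ex_P p (m + 1) * cmod (l (m + 1)) + cmod (l 0)) / ex_P p m"
    using False Pm by (simp add: ex_shift_coeff_def norm_divide divide_right_mono)
  also have "\<dots> = (ex_P p (m + 1) / ex_P p m) * cmod (l (m + 1)) + cmod (l 0) / ex_P p m"
    using Pm by (simp add: field_simps)
  also have "\<dots> \<le> 4 * cmod (l (m + 1)) + cmod (l 0) / ex_P p m"
    using ex_P_succ_le[OF p, of m] False Pm
    by (intro add_right_mono mult_right_mono) (auto simp: field_simps)
  finally have "cmod (ex_shift_coeff p l m) powr p \<le> (4 * cmod (l (m + 1)) + cmod (l 0) / ex_P p m) powr p"
    using p by (intro powr_mono2) auto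
  also have "\<dots> \<le> 2 powr p * ((4 * cmod (l (m + 1))) powr p + (cmod (l 0) / ex_P p m) powr p)"
    using Pm p by (intro powr_add_le_two_powr) auto
  also have "\<dots> = 2 powr p * (4 powr p * cmod (l (m + 1)) powr p + cmod (l 0) powr p * ex_P_inv_powr p m)"
    using False Pm by (simp add: ex_P_inv_powr_def powr_mult powr_divide)
  finally show ?thesis .
qed

lemma ex_shift_coeff_bounded:
  assumes p: "1 \<le> p"
  obtains C where "0 < C"
    and "\<And>l. l \<in> lp p \<Longrightarrow> ex_shift_coeff p l \<in> lp p \<and> lpnorm p (ex_shift_coeff p l) \<le> C * lpnorm p l"
proof
  define Q where "Q = infsum (ex_P_inv_powr p) UNIV"
  have Q: "0 \<le> Q" unfolding Q_def by (intro infsum_nonneg) (simp add: ex_P_inv_powr_def)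
  let ?K = "2 powr p * 4 powr p + 2 powr p * Q"
  have "0 < ?K" using Q by (intro add_pos_nonneg) auto
  then show "0 < ?K powr (1 / p)" by simp
  fix l
  assume l: "l \<in> lp p"
  have sl: "(\<lambda>n. cmod (l n) powr p) summable_on UNIV" using l by (simp add: lp_def)
  define S where "S = (\<Sum>\<^sub>\<infinity>n. cmod (l n) powr p)"
  have sl1: "(\<lambda>m. cmod (l (m + 1)) powr p) summable_on UNIV"
    using summable_on_shift_int[of "\<lambda>n. cmod (l n) powr p" 1] sl by simp
  have sq: "ex_P_inv_powr p summable_on UNIV" using ex_P_inv_powr_summable p by simp
  define G where "G m = 2 powr p * (4 powr p * cmod (l (m + 1)) powr p + cmod (l 0) powr p * ex_P_inv_powr p m)" for m
  have sG: "G summable_on UNIV"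
    unfolding G_def by (intro summable_on_cmult_right summable_on_add sl1 summable_on_cmult_left sq)
  have "infsum G UNIV = 2 powr p * (\<Sum>\<^sub>\<infinity>m. 4 powr p * cmod (l (m + 1)) powr p + cmod (l 0) powr p * ex_P_inv_powr p m)"
    unfolding G_def by (rule infsum_cmult_right')
  also have "\<dots> = 2 powr p * (4 powr p * S + cmod (l 0) powr p * Q)"
    using sl1 sq
    by (simp add: infsum_add summable_on_cmult_right summable_on_cmult_left infsum_cmult_right'
        infsum_cmult_left' infsum_shift_int[of "\<lambda>n. cmod (l n) powr p"] S_def Q_def)
  also have "\<dots> \<le> 2 powr p * (4 powr p * S + S * Q)"
    using norm_powr_le_lp_sum[OF l, of 0] Q by (simp add: S_def mult_right_mono)
  finally have iG: "infsum G UNIV \<le> ?K * S"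
    by (simp add: algebra_simps)
  have pt: "cmod (ex_shift_coeff p l m) powr p \<le> G m" for m
    unfolding G_def by (rule ex_shift_coeff_powr_le[OF p])
  have "lpnorm p (ex_shift_coeff p l) \<le> infsum G UNIV powr (1 / p)"
    using p sG pt by (intro lp_dominated) auto
  also have "\<dots> \<le> (?K * S) powr (1 / p)"
    using p iG order_trans[OF powr_ge_zero pt] by (intro powr_mono2 infsum_nonneg) auto
  also have "\<dots> = ?K powr (1 / p) * lpnorm p l"
    using Q by (simp add: powr_mult S_def lpnorm_def infsum_nonneg)
  finally show "ex_shift_coeff p l \<in> lp p \<and> lpnorm p (ex_shift_coeff p l) \<le> ?K powr (1 / p) * lpnorm p l"
    using p sG pt lp_dominated(1) by auto
qed

lemma ex_Bw_represents:
  assumes p: "1 \<le> p" and rep: "represents p ex_a (ex_b p) l f"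
  shows "represents p ex_a (ex_b p) (ex_shift_coeff p l) (Bw ex_a (ex_b p) (ex_w p) f)"
    and "z \<in> Omega ex_a (ex_b p) \<Longrightarrow>
           (\<lambda>n. ex_w p n * laurent_coeff ex_a (ex_b p) f n * z powi (n - 1)) summable_on UNIV"
proof -
  have p0: "0 < p" using p by simp
  have "l \<in> lp p" using rep by (simp add: represents_def)
  then have Tl: "ex_shift_coeff p l \<in> lp p"
    using ex_shift_coeff_bounded[OF p] by metis
  define E where "E z n = ex_w p n * laurent_coeff ex_a (ex_b p) f n * z powi (n - 1)" for z n
  have E: "E z (m + 1) = block_coeff ex_a (ex_b p) (ex_shift_coeff p l) m * z powi m" for z m
    by (simp add: E_def ex_laurent_coeff[OF p0 rep] ex_block_coeff_shift_coeff)
  have sE: "E z summable_on UNIV"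
    and iE: "infsum (E z) UNIV = (\<Sum>\<^sub>\<infinity>n. ex_shift_coeff p l n * fblock ex_a (ex_b p) n z)"
    if "z \<in> Omega ex_a (ex_b p)" for z
  proof -
    have "(\<lambda>m. E z (m + 1)) summable_on UNIV"
      unfolding E by (rule ex_fblock_series(2)[OF p0 Tl that])
    then show "E z summable_on UNIV" using summable_on_shift_int[of "E z" 1] by simp
    have "infsum (E z) UNIV = (\<Sum>\<^sub>\<infinity>m. E z (m + 1))" using infsum_shift_int[of "E z" 1] by simp
    also have "\<dots> = (\<Sum>\<^sub>\<infinity>n. ex_shift_coeff p l n * fblock ex_a (ex_b p) n z)"
      unfolding E by (rule ex_fblock_series(3)[OF p0 Tl that, symmetric])
    finally show "infsum (E z) UNIV = (\<Sum>\<^sub>\<infinity>n. ex_shift_coeff p l n * fblock ex_a (ex_b p) n z)" .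
  qed
  show "z \<in> Omega ex_a (ex_b p) \<Longrightarrow>
          (\<lambda>n. ex_w p n * laurent_coeff ex_a (ex_b p) f n * z powi (n - 1)) summable_on UNIV"
    using sE unfolding E_def .
  show "represents p ex_a (ex_b p) (ex_shift_coeff p l) (Bw ex_a (ex_b p) (ex_w p) f)"
    using Tl ex_fblock_series(1)[OF p0 Tl] iE unfolding E_def[abs_def] by (auto simp: represents_def Bw_def)
qed

lemma ex_Bw_lpab:
  assumes "1 \<le> p" "f \<in> lpab p ex_a (ex_b p)"
  shows "Bw ex_a (ex_b p) (ex_w p) f \<in> lpab p ex_a (ex_b p)"
  using assms ex_Bw_represents(1)[OF assms(1)] unfolding lpab_def by blast

lemma ex_Bw_bounded:
  assumes p: "1 \<le> p"
  shows "Bw_bounded p ex_a (ex_b p) (ex_w p)"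
proof -
  obtain C where C: "0 < C"
    and bound: "\<And>l. l \<in> lp p \<Longrightarrow> ex_shift_coeff p l \<in> lp p \<and> lpnorm p (ex_shift_coeff p l) \<le> C * lpnorm p l"
    using ex_shift_coeff_bounded[OF p] by metis
  have "lpab_norm p ex_a (ex_b p) (Bw ex_a (ex_b p) (ex_w p) f) \<le> C * lpab_norm p ex_a (ex_b p) f"
    if "f \<in> lpab p ex_a (ex_b p)" for f
    using that C
  proof (rule lpab_norm_le_if_represents)
    fix l
    assume rep: "represents p ex_a (ex_b p) l f"
    then have "l \<in> lp p" by (simp add: represents_def)
    then show "\<exists>l'. represents p ex_a (ex_b p) l' (Bw ex_a (ex_b p) (ex_w p) f) \<and> lpnorm p l' \<le> C * lpnorm p l"
      using ex_Bw_represents(1)[OF p rep] bound by blast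
  qed
  moreover have "(\<forall>z\<in>Omega ex_a (ex_b p).
      (\<lambda>n. ex_w p n * laurent_coeff ex_a (ex_b p) f n * z powi (n - 1)) summable_on UNIV) \<and>
      Bw ex_a (ex_b p) (ex_w p) f \<in> lpab p ex_a (ex_b p)"
    if f: "f \<in> lpab p ex_a (ex_b p)" for f
  proof -
    obtain l where "represents p ex_a (ex_b p) l f" using f by (auto simp: lpab_def)
    then show ?thesis using ex_Bw_represents(2)[OF p] ex_Bw_lpab[OF p f] by blast
  qed
  ultimately show ?thesis
    unfolding Bw_bounded_def by blast
qed

definition ex_fixed_coeff :: "real \<Rightarrow> int \<Rightarrow> complex" where
  "ex_fixed_coeff p m = (if 0 \<le> m \<and> even m then of_real (1 / ex_P p m) else 0)"

lemma ex_fixed_coeff_lp: "0 < p \<Longrightarrow> ex_fixed_coeff p \<in> lp p"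
  by (intro lp_dominated(1)[OF _ ex_P_inv_powr_summable])
     (auto simp: ex_fixed_coeff_def ex_P_inv_powr_def norm_divide abs_of_pos[OF ex_P_pos])

lemma ex_shift_coeff_fixed: "ex_shift_coeff p (ex_fixed_coeff p) = ex_fixed_coeff p"
proof
  fix m :: int
  have nz: "complex_of_real (ex_P p k) \<noteq> 0" for k using ex_P_pos[of p k] by simp
  show "ex_shift_coeff p (ex_fixed_coeff p) m = ex_fixed_coeff p m"
  proof (cases "m < 0")
    case True
    then show ?thesis by (simp add: ex_shift_coeff_def ex_fixed_coeff_def)
  next
    case False
    then have "(-1::complex) ^ nat m = (if even m then 1 else -1)"
      by (simp add: even_nat_iff)
    then show ?thesis
      using False nz[of m] nz[of "m + 1"] by (auto simp: ex_shift_coeff_def ex_fixed_coeff_def)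
  qed
qed

lemma ex_Bw_fixed_point:
  assumes p: "1 \<le> p"
  obtains g where "g \<in> lpab p ex_a (ex_b p)" "Bw ex_a (ex_b p) (ex_w p) g = g" "g \<noteq> (\<lambda>z. 0)"
proof
  have p0: "0 < p" using p by simp
  define g where "g z = (if z \<in> Omega ex_a (ex_b p) then (\<Sum>\<^sub>\<infinity>n. ex_fixed_coeff p n * fblock ex_a (ex_b p) n z) else 0)" for z
  have rep: "represents p ex_a (ex_b p) (ex_fixed_coeff p) g"
    unfolding represents_def g_def using ex_fixed_coeff_lp[OF p0] ex_fblock_series(1)[OF p0 ex_fixed_coeff_lp[OF p0]]
    by auto
  then show "g \<in> lpab p ex_a (ex_b p)" by (auto simp: lpab_def)
  show "Bw ex_a (ex_b p) (ex_w p) g = g"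
    using ex_Bw_represents(1)[OF p rep] rep ex_shift_coeff_fixed
    by (auto intro: represents_fun_unique)
  show "g \<noteq> (\<lambda>z. 0)"
  proof
    assume "g = (\<lambda>z. 0)"
    then have "ex_fixed_coeff p = (\<lambda>n. 0)"
      using ex_represents_unique[OF p0 rep] represents_zero by simp
    then have "ex_fixed_coeff p 0 = 0" by simp
    then show False by (simp add: ex_fixed_coeff_def)
  qed
qed

lemma ex_shift_coeff_neg_eigen:
  assumes T: "ex_shift_coeff p l = (\<lambda>n. - l n)"
  shows "l (int n) = (-1) ^ n * of_nat (n + 1) * l 0 / of_real (ex_P p (int n))"
proof (induction n)
  case 0
  then show ?case by simp
next
  case (Suc n)
  have nz: "complex_of_real (ex_P p k) \<noteq> 0" for k using ex_P_pos[of p k] by simp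
  have "(of_real (ex_P p (int n + 1)) * l (int n + 1) + (-1) ^ n * l 0) / of_real (ex_P p (int n)) = - l (int n)"
    using fun_cong[OF T, of "int n"] by (simp add: ex_shift_coeff_def)
  then have "of_real (ex_P p (int n + 1)) * l (int n + 1) = - of_real (ex_P p (int n)) * l (int n) - (-1) ^ n * l 0"
    using nz[of "int n"] by (simp add: field_simps)
  also have "\<dots> = (-1) ^ Suc n * of_nat (Suc n + 1) * l 0"
    using nz[of "int n"] by (simp add: Suc.IH field_simps)
  finally show ?case
    using nz[of "int n + 1"] by (simp add: field_simps add.commute)
qed

text \<open>\<open>|l\<^sub>n|\<^sup>p = |l\<^sub>0|\<^sup>p / (n + 1)\<close> would be a harmonic series.\<close>
lemma ex_shift_coeff_no_neg_eigenvector: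
  assumes p: "0 < p" and l: "l \<in> lp p" and T: "ex_shift_coeff p l = (\<lambda>n. - l n)"
  shows "l = (\<lambda>n. 0)"
proof -
  have neg: "l m = 0" if "m < 0" for m
    using fun_cong[OF T, of m] that by (simp add: ex_shift_coeff_def)
  have l0: "l 0 = 0"
  proof (rule ccontr)
    assume "l 0 \<noteq> 0"
    define c where "c = cmod (l 0) powr p"
    have c: "0 < c" using \<open>l 0 \<noteq> 0\<close> by (simp add: c_def)
    have eq: "cmod (l (int n)) powr p = c * inverse (real (Suc n))" for n
    proof -
      have P: "0 < ex_P p (int n)" by (rule ex_P_pos)
      have "cmod (l (int n)) powr p = real (Suc n) powr p * c / ex_P p (int n) powr p"
        using P by (simp add: ex_shift_coeff_neg_eigen[OF T] norm_mult norm_divide norm_power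
                              powr_divide powr_mult c_def del: of_nat_Suc)
      also have "\<dots> = real (Suc n) powr p * c / (real (Suc n) powr p * real (Suc n))"
        using ex_P_powr[OF p, of "int n"] by (simp add: powr_add add.commute)
      finally show ?thesis by (simp add: divide_inverse)
    qed
    have "(\<lambda>m. cmod (l m) powr p) summable_on range int"
      using l by (auto simp: lp_def intro: summable_on_subset)
    then have "summable (\<lambda>n. cmod (l (int n)) powr p)"
      by (simp add: summable_on_reindex o_def flip: summable_on_UNIV_nonneg_real_iff)
    then have "summable (\<lambda>n. inverse c * (c * inverse (real (Suc n))))"
      by (simp add: eq summable_mult)
    then have "summable (\<lambda>n. inverse (real (Suc n)))" using c by simp
    then show False
      using summable_Suc_iff[where f = "\<lambda>n. inverse (real n)"] not_summable_harmonic[where 'a = real] by simp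
  qed
  show ?thesis
  proof
    fix m :: int
    show "l m = 0"
      using neg[of m] ex_shift_coeff_neg_eigen[OF T, of "nat m"] l0 by (cases "m < 0") auto
  qed
qed

lemma ex_Bw_no_neg_eigenvector:
  assumes p: "1 \<le> p" and h: "h \<in> lpab p ex_a (ex_b p)" and Bh: "Bw ex_a (ex_b p) (ex_w p) h = (\<lambda>z. - h z)"
  shows "h = (\<lambda>z. 0)"
proof -
  have p0: "0 < p" using p by simp
  obtain l where rep: "represents p ex_a (ex_b p) l h" using h by (auto simp: lpab_def)
  have "represents p ex_a (ex_b p) (\<lambda>n. - l n) (Bw ex_a (ex_b p) (ex_w p) h)"
    using represents_cmult[OF rep, of "-1"] Bh by simp
  then have "ex_shift_coeff p l = (\<lambda>n. - l n)"
    using ex_represents_unique[OF p0 ex_Bw_represents(1)[OF p rep]] by blast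
  then have "l = (\<lambda>n. 0)"
    using ex_shift_coeff_no_neg_eigenvector[OF p0] rep by (simp add: represents_def)
  then show ?thesis
    using rep represents_zero represents_fun_unique by metis
qed

theorem corollary4p16:
  fixes p :: real
  assumes "1 \<le> p"
  shows "\<exists>a b w. admissible a b \<and> Bw_bounded p a b w \<and> \<not> Bw_similar_to_shift p a b w"
proof (intro exI conjI)
  show "admissible ex_a (ex_b p)" using assms by (simp add: admissible_ex)
  show "Bw_bounded p ex_a (ex_b p) (ex_w p)" using assms by (rule ex_Bw_bounded)
  show "\<not> Bw_similar_to_shift p ex_a (ex_b p) (ex_w p)"
  proof
    assume sim: "Bw_similar_to_shift p ex_a (ex_b p) (ex_w p)"
    obtain g where "g \<in> lpab p ex_a (ex_b p)" "Bw ex_a (ex_b p) (ex_w p) g = g" "g \<noteq> (\<lambda>z. 0)"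
      using ex_Bw_fixed_point[OF assms] by blast
    then obtain h where "h \<in> lpab p ex_a (ex_b p)" "Bw ex_a (ex_b p) (ex_w p) h = (\<lambda>z. - h z)" "h \<noteq> (\<lambda>z. 0)"
      using similar_to_shift_neg_eigenvector[OF sim ex_Bw_lpab[OF assms]] by blast
    then show False using ex_Bw_no_neg_eigenvector[OF assms] by blast
  qed
qed

end
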